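(* Let $\mathbb{X},\mathbb{Y}$ be two-dimensional smooth real Banach spaces, with $\mathbb{Y}$ in addition strictly convex. Let $T\in\mathbb{L}(\mathbb{X},\mathbb{Y})$ be of rank one with $\|T\|=1$, and suppose $M_T=\{\pm x\}$. Then $T$ is an extreme contraction if and only if $(x,Tx)$ is not a CPP.
   Context: $M_T=\{x\in S_{\mathbb{X}}:\|Tx\|=\|T\|\}$. A norm one $T$ is an extreme contraction if it is an extreme point of the closed unit ball of $\mathbb{L}(\mathbb{X},\mathbb{Y})$. $B(x,r)=\{u:\|u-x\|<r\}$. $x\perp_B y$ means $\|x+\lambda y\|\ge\|x\|$ for all real $\lambda$; $x^\perp=\{y:x\perp_By\}$. For $x\in S_{\mathbb{X}}$, $y\in S_{\mathbb{Y}}$, $(x,y)$ is a CPP if there exist $r>0,\mu>0$ such that for all $z\in x^\perp\cap S_{\mathbb{X}}$, all $w\in y^\perp\cap S_{\mathbb{Y}}$ and all $a,b\in\mathbb{R}$, $ax+bz\in B(x,r)\cap S_{\mathbb{X}}$ implies $\|ay+b\mu w\|\le1$. *)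

theory Defs
  imports "HOL-Analysis.Analysis"
begin

definition bj_orth :: "'a::real_normed_vector \<Rightarrow> 'a \<Rightarrow> bool" where
  "bj_orth x y \<longleftrightarrow> (\<forall>l::real. norm (x + l *\<^sub>R y) \<ge> norm x)"

definition smooth_space :: "'a::real_normed_vector itself \<Rightarrow> bool" where
  "smooth_space _ \<longleftrightarrow>
     (\<forall>x::'a. norm x = 1 \<longrightarrow>
        (\<exists>!f::'a \<Rightarrow> real. bounded_linear f \<and> onorm f = 1 \<and> f x = 1))"

definition strictly_convex_space :: "'a::real_normed_vector itself \<Rightarrow> bool" where
  "strictly_convex_space _ \<longleftrightarrow>
     (\<forall>x y::'a. norm x = 1 \<longrightarrow> norm y = 1 \<longrightarrow> x \<noteq> y \<longrightarrow> norm ((1/2) *\<^sub>R (x + y)) < 1)"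

definition norm_att :: "('a::real_normed_vector \<Rightarrow>\<^sub>L 'b::real_normed_vector) \<Rightarrow> 'a set" where
  "norm_att T = {x. norm x = 1 \<and> norm (blinfun_apply T x) = norm T}"

definition CPP :: "'a::real_normed_vector \<Rightarrow> 'b::real_normed_vector \<Rightarrow> bool" where
  "CPP x y \<longleftrightarrow> norm x = 1 \<and> norm y = 1 \<and>
     (\<exists>r>0. \<exists>\<mu>>0. \<forall>z w. \<forall>a b::real.
        bj_orth x z \<longrightarrow> norm z = 1 \<longrightarrow> bj_orth y w \<longrightarrow> norm w = 1 \<longrightarrow>
        a *\<^sub>R x + b *\<^sub>R z \<in> ball x r \<longrightarrow> norm (a *\<^sub>R x + b *\<^sub>R z) = 1 \<longrightarrow>
        norm (a *\<^sub>R y + (b * \<mu>) *\<^sub>R w) \<le> 1)"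

end

theory Submission
  imports Defs
begin

(* Put y = T x. In a smooth plane, Birkhoff-James orthogonality at x and at y is vanishing of the
   unique support functionals phi at x and psi at y, and since T has rank one and attains its norm
   at x, T u = phi u *R y.

   T is not extreme iff T + S and T - S are contractions for some S \<noteq> 0. For such S, strict
   convexity at y forces S x = 0, and uniqueness of the support functional at x forces psi o S = 0,
   so S maps the kernel line of phi into the kernel line of psi; the bounds on T u + S u and
   T u - S u are then precisely a CPP with mu = norm (S z0) for a unit z0 in the kernel of phi.

   Conversely, let P u = beta u *R w0, where beta is the z0-coordinate and w0 a unit vector in the
   kernel of psi. A CPP says that T + t P has norm at most 1 at unit vectors near x (and, by
   symmetry, near -x) for small t. On the rest of the unit sphere, which is compact, |phi| stays
   below 1 - delta because M_T = {x, -x}, so T + t P is a contraction there as well for small t.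
   Hence T +- t P are contractions and T is not extreme. *)

lemma independent_card_le_dim:
  fixes S V :: "'a::real_vector set"
  assumes "0 < dim V" "S \<subseteq> V" "independent S"
  shows "card S \<le> dim V"
proof -
  obtain B where B: "B \<subseteq> V" "independent B" "V \<subseteq> span B" "card B = dim V"
    by (rule real_vector.basis_exists)
  then have "finite B" using assms(1) card.infinite by fastforce
  then show ?thesis
    using real_vector.independent_span_bound[OF _ assms(3), of B] B assms(2) by auto
qed

lemma independent_pair:
  fixes x z :: "'a::real_vector"
  assumes "x \<noteq> 0" "z \<notin> span {x}"
  shows "independent {x, z}"
  using real_vector.independent_insertI[OF assms(2)] assms(1)
  by (simp add: insert_commute real_vector.independent_insert)

lemma dim2_span_pair:
  fixes x z :: "'a::real_vector"
  assumes "dim (UNIV::'a set) = 2" "x \<noteq> 0" "z \<notin> span {x}"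
  shows "span {x, z} = UNIV"
proof (rule ccontr)
  assume "span {x, z} \<noteq> UNIV"
  then obtain u where u: "u \<notin> span {x, z}" by blast
  then have "independent {u, x, z}"
    using real_vector.independent_insertI independent_pair[OF assms(2,3)] by blast
  then have "card {u, x, z} \<le> 2" using independent_card_le_dim[of UNIV "{u, x, z}"] assms(1) by simp
  moreover have "u \<noteq> x" "u \<noteq> z" using u real_vector.span_base by blast+
  moreover have "x \<noteq> z" using assms(3) real_vector.span_base by blast
  ultimately show False by simp
qed

lemma dim2_exists_not_in_span:
  fixes x :: "'a::real_vector"
  assumes "dim (UNIV::'a set) = 2"
  obtains z where "z \<notin> span {x}"
proof -
  have "\<not> UNIV \<subseteq> span {x}"
    using real_vector.dim_le_card[of UNIV "{x}"] assms by auto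
  then show ?thesis using that by blast
qed

lemma dim2_coordinates:
  fixes x z :: "'a::real_vector"
  assumes "dim (UNIV::'a set) = 2" "x \<noteq> 0" "z \<notin> span {x}"
  obtains \<alpha> \<beta> where "linear \<alpha>" "linear \<beta>" "\<And>u. \<alpha> u *\<^sub>R x + \<beta> u *\<^sub>R z = u"
    "\<alpha> x = 1" "\<alpha> z = 0" "\<beta> x = 0" "\<beta> z = 1"
proof -
  let ?B = "{x, z}"
  let ?R = "real_vector.representation ?B"
  have span: "span ?B = UNIV" by (rule dim2_span_pair[OF assms])
  have xz: "x \<noteq> z" using assms(3) real_vector.span_base by blast
  have ind: "independent ?B" by (rule independent_pair[OF assms(2,3)])
  have lin: "linear (\<lambda>u. ?R u b)" for b
    by (rule linearI) (simp_all add: span real_vector.representation_add[OF ind]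
        real_vector.representation_scale[OF ind])
  have "?R u x *\<^sub>R x + ?R u z *\<^sub>R z = u" for u
    using real_vector.sum_representation_eq[OF ind, of u ?B] span xz by simp
  moreover have "?R x x = 1" "?R z x = 0" "?R x z = 0" "?R z z = 1"
    using real_vector.representation_basis[OF ind] xz by auto
  ultimately show ?thesis using that[OF lin lin] by blast
qed

lemma dim2_kernel_subset_span:
  fixes f :: "'a::real_vector \<Rightarrow> real"
  assumes "dim (UNIV::'a set) = 2" "linear f" "f x \<noteq> 0" "z \<noteq> 0" "f z = 0" "f v = 0"
  shows "v \<in> span {z}"
proof -
  interpret f: linear f by fact
  have "x \<notin> span {z}"
    using assms(3,5) by (auto simp: real_vector.span_singleton f.scale)
  then obtain \<alpha> \<beta> where coord: "\<And>u. \<alpha> u *\<^sub>R z + \<beta> u *\<^sub>R x = u"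
    using dim2_coordinates[OF assms(1,4)] by metis
  have "f v = \<beta> v * f x"
    using arg_cong[OF coord[of v], of f] assms(5) by (simp add: f.add f.scale)
  then have "v = \<alpha> v *\<^sub>R z" using coord[of v] assms(3,6) by simp
  then show ?thesis by (metis real_vector.span_base real_vector.span_scale singletonI)
qed

lemma dim2_unit_kernel_vectors:
  fixes f :: "'a::real_normed_vector \<Rightarrow> real"
  assumes "dim (UNIV::'a set) = 2" "linear f" "f x \<noteq> 0"
    and "f z = 0" "norm z = 1" "f v = 0" "norm v = 1"
  shows "v = z \<or> v = - z"
proof -
  have "z \<noteq> 0" using assms(5) by auto
  then obtain k where "v = k *\<^sub>R z"
    using dim2_kernel_subset_span[OF assms(1-3) _ assms(4,6)] by (auto simp: real_vector.span_singleton)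
  moreover from this have "\<bar>k\<bar> = 1" using assms(5,7) by simp
  ultimately show ?thesis by (cases "k \<ge> 0") auto
qed

lemma dim2_exists_unit_in_kernel:
  fixes f :: "'a::real_normed_vector \<Rightarrow> real"
  assumes "dim (UNIV::'a set) = 2" "linear f" "f x = 1"
  obtains z where "norm z = 1" "f z = 0"
proof -
  interpret f: linear f by fact
  obtain v where v: "v \<notin> span {x}" by (rule dim2_exists_not_in_span[OF assms(1)])
  define v' where "v' = v - f v *\<^sub>R x"
  have "v' \<noteq> 0"
  proof
    assume "v' = 0"
    then have "v = f v *\<^sub>R x" by (simp add: v'_def)
    then show False using v by (metis real_vector.span_base real_vector.span_scale singletonI)
  qed
  moreover have "f v' = 0" using assms(3) by (simp add: v'_def f.diff f.scale)
  ultimately show ?thesis using that[of "v' /\<^sub>R norm v'"] by (simp add: f.scale)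
qed

lemma rank_one_image_in_span:
  fixes f :: "'a::real_vector \<Rightarrow> 'b::real_vector"
  assumes "dim (range f) = 1" "f x \<noteq> 0"
  shows "f u \<in> span {f x}"
proof (rule ccontr)
  assume "f u \<notin> span {f x}"
  then have "independent {f u, f x}"
    using independent_pair[OF assms(2)] by (simp add: insert_commute)
  then have "card {f u, f x} \<le> 1"
    using independent_card_le_dim[of "range f" "{f u, f x}"] assms(1) by simp
  moreover have "f u \<noteq> f x" using \<open>f u \<notin> span {f x}\<close> real_vector.span_base by blast
  ultimately show False by simp
qed

definition support_functional :: "('a::real_normed_vector \<Rightarrow> real) \<Rightarrow> 'a \<Rightarrow> bool" where
  "support_functional f x \<longleftrightarrow> bounded_linear f \<and> onorm f = 1 \<and> f x = 1"

definition support_functional_at :: "'a::real_normed_vector \<Rightarrow> 'a \<Rightarrow> real" where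
  "support_functional_at x = (THE f. support_functional f x)"

lemma smooth_space_ex1_support_functional:
  fixes x :: "'a::real_normed_vector"
  assumes "smooth_space TYPE('a)" "norm x = 1"
  shows "\<exists>!f. support_functional f x"
  using assms by (simp add: smooth_space_def support_functional_def)

lemma support_functional_at:
  fixes x :: "'a::real_normed_vector"
  assumes "smooth_space TYPE('a)" "norm x = 1"
  shows "support_functional (support_functional_at x) x"
    and "support_functional f x \<Longrightarrow> f = support_functional_at x"
  using theI'[OF smooth_space_ex1_support_functional[OF assms]]
    smooth_space_ex1_support_functional[OF assms]
  by (auto simp: support_functional_at_def)

lemma support_functional_abs_le:
  assumes "support_functional f x"
  shows "\<bar>f u\<bar> \<le> norm u"
  using assms onorm[of f u] by (simp add: support_functional_def)

lemma support_functionalI: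
  assumes "linear f" "\<And>u. \<bar>f u\<bar> \<le> norm u" "norm x = 1" "f x = 1"
  shows "support_functional f x"
proof -
  interpret f: linear f by fact
  have bl: "bounded_linear f"
    by (rule bounded_linear_intro[where K=1]) (use assms(2) in \<open>simp_all add: f.add f.scale\<close>)
  have "onorm f \<le> 1" using assms(2) by (intro onorm_bound) auto
  moreover have "1 \<le> onorm f" using le_onorm[OF bl, of x] assms(3,4) by simp
  ultimately show ?thesis using bl assms(4) by (simp add: support_functional_def)
qed

lemma support_functional_compose:
  assumes "support_functional \<psi> y" "linear g" "\<And>u. norm (g u) \<le> norm u" "g x = y" "norm x = 1"
  shows "support_functional (\<lambda>u. \<psi> (g u)) x"
proof (rule support_functionalI)
  show "linear (\<lambda>u. \<psi> (g u))"
    using assms(1,2) linear_compose[of g \<psi>] bounded_linear.linear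
    by (auto simp: support_functional_def o_def)
  show "\<bar>\<psi> (g u)\<bar> \<le> norm u" for u
    using support_functional_abs_le[OF assms(1), of "g u"] assms(3)[of u] by simp
qed (use assms in \<open>auto simp: support_functional_def\<close>)

lemma bj_orth_if_support_functional_vanishes:
  assumes "support_functional f x" "norm x = 1" "f z = 0"
  shows "bj_orth x z"
  unfolding bj_orth_def
proof
  fix l :: real
  interpret f: bounded_linear f using assms(1) by (simp add: support_functional_def)
  have "f (x + l *\<^sub>R z) = 1" using assms by (simp add: support_functional_def f.add f.scaleR)
  then show "norm x \<le> norm (x + l *\<^sub>R z)"
    using support_functional_abs_le[OF assms(1), of "x + l *\<^sub>R z"] assms(2) by simp
qed

text \<open>If \<open>z \<notin> span {x}\<close>, orthogonality of \<open>z\<close> to \<open>x\<close> makes the \<open>x\<close>-coordinate with respect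
  to the basis \<open>x, z\<close> a support functional at \<open>x\<close>; by smoothness it is \<open>f\<close>.\<close>

lemma support_functional_vanishes_if_bj_orth:
  fixes x :: "'a::real_normed_vector"
  assumes "dim (UNIV::'a set) = 2" "smooth_space TYPE('a)" "norm x = 1"
    and "support_functional f x" "bj_orth x z"
  shows "f z = 0"
proof (cases "z \<in> span {x}")
  case True
  then obtain k where z: "z = k *\<^sub>R x" by (auto simp: real_vector.span_singleton)
  have "k = 0"
  proof (rule ccontr)
    assume "k \<noteq> 0"
    then have "norm (x + (- 1 / k) *\<^sub>R z) = 0" by (simp add: z)
    moreover have "norm x \<le> norm (x + (- 1 / k) *\<^sub>R z)"
      using assms(5) by (simp only: bj_orth_def)
    ultimately show False using assms(3) by simp
  qed
  then show ?thesis
    using assms(4) by (simp add: z support_functional_def linear_simps)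
next
  case False
  have "x \<noteq> 0" using assms(3) by auto
  then obtain \<alpha> \<beta> where \<alpha>: "linear \<alpha>" "\<alpha> x = 1" "\<alpha> z = 0"
    and coord: "\<And>u. \<alpha> u *\<^sub>R x + \<beta> u *\<^sub>R z = u"
    using dim2_coordinates[OF assms(1) _ False] by metis
  have "\<bar>\<alpha> u\<bar> \<le> norm u" for u
  proof (cases "\<alpha> u = 0")
    case False
    have "u = \<alpha> u *\<^sub>R (x + (\<beta> u / \<alpha> u) *\<^sub>R z)"
      using coord[of u] False by (simp add: algebra_simps)
    then have "norm u = \<bar>\<alpha> u\<bar> * norm (x + (\<beta> u / \<alpha> u) *\<^sub>R z)"
      by (metis norm_scaleR)
    moreover have "1 \<le> norm (x + (\<beta> u / \<alpha> u) *\<^sub>R z)"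
      using assms(3,5) by (simp add: bj_orth_def)
    ultimately show ?thesis by (simp add: mult_le_cancel_left1)
  qed simp
  then have "support_functional \<alpha> x" using support_functionalI \<alpha> assms(3) by blast
  then have "\<alpha> = f"
    using smooth_space_ex1_support_functional[OF assms(2,3)] assms(4) by blast
  then show ?thesis using \<alpha>(3) by simp
qed

lemma bj_orth_iff_support_functional_vanishes:
  fixes x :: "'a::real_normed_vector"
  assumes "dim (UNIV::'a set) = 2" "smooth_space TYPE('a)" "norm x = 1" "support_functional f x"
  shows "bj_orth x z \<longleftrightarrow> f z = 0"
  using support_functional_vanishes_if_bj_orth[OF assms] bj_orth_if_support_functional_vanishes[OF assms(4,3)]
  by blast

lemma convex_add_scaleR_mem:
  assumes "convex S" "a + b \<in> S" "a - b \<in> S" "\<bar>t\<bar> \<le> 1"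
  shows "a + t *\<^sub>R b \<in> S"
proof -
  have "((1 + t) / 2) *\<^sub>R (a + b) + ((1 - t) / 2) *\<^sub>R (a - b) \<in> S"
    using assms by (intro convexD) (auto simp: add_divide_distrib [symmetric])
  moreover have "((1 + t) / 2) *\<^sub>R (a + b) + ((1 - t) / 2) *\<^sub>R (a - b)
      = ((1 + t) / 2 + (1 - t) / 2) *\<^sub>R a + ((1 + t) / 2 - (1 - t) / 2) *\<^sub>R b"
    by (simp add: algebra_simps)
  then have "((1 + t) / 2) *\<^sub>R (a + b) + ((1 - t) / 2) *\<^sub>R (a - b) = a + t *\<^sub>R b"
    by (simp flip: add_divide_distrib diff_divide_distrib)
  ultimately show ?thesis by simp
qed

lemma extreme_point_of_convex_iff:
  assumes "convex S" "x \<in> S"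
  shows "x extreme_point_of S \<longleftrightarrow> \<not> (\<exists>v. v \<noteq> 0 \<and> x + v \<in> S \<and> x - v \<in> S)"
proof
  assume "x extreme_point_of S"
  moreover have "x \<in> open_segment (x - v) (x + v)" if "v \<noteq> 0" for v
    using midpoint_in_open_segment[of "x - v" "x + v"] that
    by (simp add: midpoint_def algebra_simps flip: scaleR_2)
  ultimately show "\<not> (\<exists>v. v \<noteq> 0 \<and> x + v \<in> S \<and> x - v \<in> S)"
    unfolding extreme_point_of_def by blast
next
  assume no_pm: "\<not> (\<exists>v. v \<noteq> 0 \<and> x + v \<in> S \<and> x - v \<in> S)"
  show "x extreme_point_of S"
    unfolding extreme_point_of_def
  proof (intro conjI assms(2) ballI notI)
    fix a b assume ab: "a \<in> S" "b \<in> S" "x \<in> open_segment a b"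
    then obtain t where t: "a \<noteq> b" "0 < t" "t < 1" "x = (1 - t) *\<^sub>R a + t *\<^sub>R b"
      by (auto simp: in_segment)
    define m where "m = min t (1 - t)"
    have pm: "x + s *\<^sub>R (b - a) \<in> S" if "\<bar>s\<bar> \<le> m" for s
    proof -
      have "x + s *\<^sub>R (b - a) = (1 - (t + s)) *\<^sub>R a + (t + s) *\<^sub>R b"
        by (simp add: t(4) algebra_simps)
      then show ?thesis
        using convexD_alt[OF assms(1) ab(1,2), of "t + s"] that t by (auto simp: m_def)
    qed
    have "0 < m" using t by (simp add: m_def)
    then have "x + m *\<^sub>R (b - a) \<in> S" "x - m *\<^sub>R (b - a) \<in> S"
      using pm[of m] pm[of "- m"] by auto
    moreover have "m *\<^sub>R (b - a) \<noteq> 0" using t \<open>0 < m\<close> by simp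
    ultimately show False using no_pm by blast
  qed
qed

lemma strictly_convex_space_eq_0_if_norm_add_diff_le:
  fixes y v :: "'a::real_normed_vector"
  assumes "strictly_convex_space TYPE('a)" "norm y = 1"
    and "norm (y + v) \<le> 1" "norm (y - v) \<le> 1"
  shows "v = 0"
proof (rule ccontr)
  assume "v \<noteq> 0"
  have sum: "(y + v) + (y - v) = 2 *\<^sub>R y" by (simp add: scaleR_2)
  then have "2 \<le> norm (y + v) + norm (y - v)"
    using norm_triangle_ineq[of "y + v" "y - v"] assms(2) by simp
  then have "norm (y + v) = 1" "norm (y - v) = 1" using assms(3,4) by auto
  moreover have "y + v \<noteq> y - v" using \<open>v \<noteq> 0\<close> by (simp add: eq_neg_iff_add_eq_0 flip: scaleR_2)
  ultimately have "norm ((1/2) *\<^sub>R ((y + v) + (y - v))) < 1"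
    using assms(1) unfolding strictly_convex_space_def by blast
  then show False using sum assms(2) by simp
qed

lemma compact_cball_if_bounded_coordinates:
  fixes x z :: "'a::real_normed_vector"
  assumes coord: "\<And>u. \<alpha> u *\<^sub>R x + \<beta> u *\<^sub>R z = u"
    and "\<And>u. \<bar>\<alpha> u\<bar> \<le> C * norm u" "\<And>u. \<bar>\<beta> u\<bar> \<le> C * norm u"
  shows "compact (cball (0::'a) 1)"
proof -
  define L where "L p = fst p *\<^sub>R x + snd p *\<^sub>R z" for p :: "real \<times> real"
  define K where "K = ({-\<bar>C\<bar>..\<bar>C\<bar>} \<times> {-\<bar>C\<bar>..\<bar>C\<bar>}) \<inter> {p. norm (L p) \<le> 1}"
  have contL: "continuous_on UNIV L" unfolding L_def by (intro continuous_intros)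
  have "compact K" unfolding K_def L_def
    by (intro compact_Int_closed compact_Times compact_Icc closed_Collect_le continuous_intros)
  moreover have "cball 0 1 = L ` K"
  proof
    show "cball 0 1 \<subseteq> L ` K"
    proof
      fix u :: 'a assume "u \<in> cball 0 1"
      then have "norm u \<le> 1" by simp
      then have "\<bar>\<alpha> u\<bar> \<le> \<bar>C\<bar>" "\<bar>\<beta> u\<bar> \<le> \<bar>C\<bar>"
        using assms(2,3)[of u] mult_left_le[of "norm u" "\<bar>C\<bar>"]
          mult_right_mono[OF abs_ge_self norm_ge_zero, of C u] by auto
      then have "(\<alpha> u, \<beta> u) \<in> K"
        using \<open>norm u \<le> 1\<close> coord[of u] by (auto simp: K_def L_def abs_le_iff)
      then show "u \<in> L ` K" using coord[of u] by (force simp: L_def)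
    qed
  qed (auto simp: K_def)
  ultimately show ?thesis
    using compact_continuous_image[OF continuous_on_subset[OF contL]] by auto
qed

lemma linear_blinfun_apply: "linear (blinfun_apply f)"
  by (rule bounded_linear.linear[OF blinfun.bounded_linear_right])

lemma norm_blinfun_apply_le_if_norm_le_1:
  assumes "norm f \<le> 1"
  shows "norm (blinfun_apply f u) \<le> norm u"
  using norm_blinfun[of f u] mult_right_mono[OF assms norm_ge_zero[of u]] by simp

lemma norm_blinfun_le_1_if_on_sphere:
  assumes "\<And>u. norm u = 1 \<Longrightarrow> norm (blinfun_apply f u) \<le> 1"
  shows "norm f \<le> 1"
proof (rule norm_blinfun_bound)
  show "norm (blinfun_apply f u) \<le> 1 * norm u" for u
  proof (cases "u = 0")
    case False
    have "blinfun_apply f u = norm u *\<^sub>R blinfun_apply f (u /\<^sub>R norm u)"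
      using False by (simp add: blinfun.scaleR_right)
    moreover have "norm (blinfun_apply f (u /\<^sub>R norm u)) \<le> 1" using False assms by simp
    ultimately show ?thesis by (simp add: mult_left_le)
  qed simp
qed simp

locale smooth_rank_one_contraction =
  fixes T :: "'a::real_normed_vector \<Rightarrow>\<^sub>L 'b::real_normed_vector" and x :: 'a
  assumes dim_domain: "dim (UNIV :: 'a set) = 2" and dim_codomain: "dim (UNIV :: 'b set) = 2"
    and smooth_domain: "smooth_space TYPE('a)" and smooth_codomain: "smooth_space TYPE('b)"
    and strictly_convex_codomain: "strictly_convex_space TYPE('b)"
    and rank_one: "dim (range (blinfun_apply T)) = 1"
    and norm_T: "norm T = 1"
    and norm_att_T: "norm_att T = {x, -x}"
begin

abbreviation y :: 'b where "y \<equiv> blinfun_apply T x"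

lemma norm_x: "norm x = 1" and norm_y: "norm y = 1"
  using norm_att_T norm_T by (auto simp: norm_att_def)

abbreviation \<phi> :: "'a \<Rightarrow> real" where "\<phi> \<equiv> support_functional_at x"
abbreviation \<psi> :: "'b \<Rightarrow> real" where "\<psi> \<equiv> support_functional_at y"

lemma support_functional_\<phi>: "support_functional \<phi> x"
  and support_functional_\<psi>: "support_functional \<psi> y"
  using support_functional_at smooth_domain smooth_codomain norm_x norm_y by blast+

lemma bounded_linear_\<phi>: "bounded_linear \<phi>" and bounded_linear_\<psi>: "bounded_linear \<psi>"
  and \<phi>_x: "\<phi> x = 1" and \<psi>_y: "\<psi> y = 1"
  using support_functional_\<phi> support_functional_\<psi> by (auto simp: support_functional_def)

interpretation \<phi>: bounded_linear \<phi> by (rule bounded_linear_\<phi>)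
interpretation \<psi>: bounded_linear \<psi> by (rule bounded_linear_\<psi>)

lemma \<psi>_T: "\<psi> (blinfun_apply T u) = \<phi> u"
proof -
  have "support_functional (\<lambda>u. \<psi> (blinfun_apply T u)) x"
    by (rule support_functional_compose[OF support_functional_\<psi> linear_blinfun_apply
          norm_blinfun_apply_le_if_norm_le_1 refl norm_x]) (simp add: norm_T)
  then have "(\<lambda>u. \<psi> (blinfun_apply T u)) = \<phi>"
    using support_functional_at(2)[OF smooth_domain norm_x] by blast
  then show ?thesis by (rule fun_cong)
qed

lemma blinfun_apply_T: "blinfun_apply T u = \<phi> u *\<^sub>R y"
proof -
  have "y \<noteq> 0" using norm_y by auto
  then obtain k where k: "blinfun_apply T u = k *\<^sub>R y"
    using rank_one_image_in_span[OF rank_one] by (auto simp: real_vector.span_singleton)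
  then have "\<phi> u = k" using \<psi>_T[of u] \<psi>_y by (simp add: \<psi>.scaleR)
  then show ?thesis using k by simp
qed

lemma bj_orth_x_iff: "bj_orth x z \<longleftrightarrow> \<phi> z = 0"
  by (rule bj_orth_iff_support_functional_vanishes[OF dim_domain smooth_domain norm_x support_functional_\<phi>])

lemma bj_orth_y_iff: "bj_orth y w \<longleftrightarrow> \<psi> w = 0"
  by (rule bj_orth_iff_support_functional_vanishes[OF dim_codomain smooth_codomain norm_y support_functional_\<psi>])

definition z0 :: 'a where "z0 = (SOME z. norm z = 1 \<and> \<phi> z = 0)"
definition w0 :: 'b where "w0 = (SOME w. norm w = 1 \<and> \<psi> w = 0)"

lemma norm_z0: "norm z0 = 1" and \<phi>_z0: "\<phi> z0 = 0"
proof -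
  obtain z where "norm z = 1" "\<phi> z = 0"
    by (rule dim2_exists_unit_in_kernel[OF dim_domain \<phi>.linear \<phi>_x])
  then show "norm z0 = 1" "\<phi> z0 = 0"
    unfolding z0_def by (metis (mono_tags, lifting) someI_ex)+
qed

lemma norm_w0: "norm w0 = 1" and \<psi>_w0: "\<psi> w0 = 0"
proof -
  obtain w where "norm w = 1" "\<psi> w = 0"
    by (rule dim2_exists_unit_in_kernel[OF dim_codomain \<psi>.linear \<psi>_y])
  then show "norm w0 = 1" "\<psi> w0 = 0"
    unfolding w0_def by (metis (mono_tags, lifting) someI_ex)+
qed

text \<open>The \<open>z0\<close>-coordinate in the basis \<open>x, z0\<close> is read off by the support functional at \<open>z0\<close>,
  which makes it manifestly bounded.\<close>

definition \<beta> :: "'a \<Rightarrow> real" where "\<beta> u = support_functional_at z0 (u - \<phi> u *\<^sub>R x)"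

lemma support_functional_z0: "support_functional (support_functional_at z0) z0"
  by (rule support_functional_at(1)[OF smooth_domain norm_z0])

lemma bounded_linear_\<beta>: "bounded_linear \<beta>"
proof -
  have "bounded_linear (support_functional_at z0)"
    using support_functional_z0 by (simp add: support_functional_def)
  moreover have "bounded_linear (\<lambda>u. u - \<phi> u *\<^sub>R x)"
    by (intro bounded_linear_sub bounded_linear_ident bounded_linear_scaleR_const bounded_linear_\<phi>)
  ultimately show ?thesis
    unfolding \<beta>_def by (rule bounded_linear_compose)
qed

interpretation \<beta>: bounded_linear \<beta> by (rule bounded_linear_\<beta>)

lemma abs_\<beta>_le: "\<bar>\<beta> u\<bar> \<le> 2 * norm u"
proof -
  have "\<bar>\<beta> u\<bar> \<le> norm (u - \<phi> u *\<^sub>R x)"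
    unfolding \<beta>_def by (rule support_functional_abs_le[OF support_functional_z0])
  also have "\<dots> \<le> norm u + \<bar>\<phi> u\<bar>" using norm_triangle_ineq4[of u "\<phi> u *\<^sub>R x"] norm_x by simp
  also have "\<dots> \<le> 2 * norm u" using support_functional_abs_le[OF support_functional_\<phi>, of u] by simp
  finally show ?thesis .
qed

lemma domain_coordinates: "\<phi> u *\<^sub>R x + \<beta> u *\<^sub>R z0 = u"
proof -
  have "\<phi> (u - \<phi> u *\<^sub>R x) = 0" using \<phi>_x by (simp add: \<phi>.diff \<phi>.scaleR)
  moreover have "z0 \<noteq> 0" using norm_z0 by auto
  ultimately have "u - \<phi> u *\<^sub>R x \<in> span {z0}"
    using dim2_kernel_subset_span[OF dim_domain \<phi>.linear, of x z0] \<phi>_x \<phi>_z0 by simp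
  then obtain k where k: "u - \<phi> u *\<^sub>R x = k *\<^sub>R z0"
    by (auto simp: real_vector.span_singleton)
  interpret \<chi>: bounded_linear "support_functional_at z0"
    using support_functional_z0 by (simp add: support_functional_def)
  have "\<beta> u = k"
    using k support_functional_z0 by (simp add: \<beta>_def support_functional_def \<chi>.scaleR)
  then show ?thesis using k by (simp add: algebra_simps)
qed

lemma \<beta>_z0: "\<beta> z0 = 1"
  using support_functional_z0 \<phi>_z0 by (simp add: \<beta>_def support_functional_def)

lemma \<beta>_x: "\<beta> x = 0"
  using domain_coordinates[of x] \<phi>_x norm_z0 by auto

lemma compact_cball_domain: "compact (cball (0::'a) 1)"
  using domain_coordinates abs_\<beta>_le support_functional_abs_le[OF support_functional_\<phi>]
  by (intro compact_cball_if_bounded_coordinates[where C=2]) (fastforce intro: order_trans)+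

lemma abs_\<phi>_lt_1:
  assumes "norm u = 1" "u \<noteq> x" "u \<noteq> - x"
  shows "\<bar>\<phi> u\<bar> < 1"
proof -
  have "u \<notin> norm_att T" using assms(2,3) norm_att_T by auto
  then have "\<bar>\<phi> u\<bar> \<noteq> 1"
    using assms(1) norm_T blinfun_apply_T[of u] norm_y by (simp add: norm_att_def)
  then show ?thesis using support_functional_abs_le[OF support_functional_\<phi>, of u] assms(1) by simp
qed

lemma abs_\<phi>_le_away_from_x:
  assumes "r > 0"
  obtains \<delta> where "\<delta> > 0"
    "\<And>u. norm u = 1 \<Longrightarrow> r \<le> dist x u \<Longrightarrow> r \<le> dist (- x) u \<Longrightarrow> \<bar>\<phi> u\<bar> \<le> 1 - \<delta>"
proof -
  define K where "K = cball 0 1 \<inter> {u. norm u = 1 \<and> r \<le> dist x u \<and> r \<le> dist (- x) u}"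
  have "compact K"
    unfolding K_def by (intro compact_Int_closed compact_cball_domain closed_Collect_conj
        closed_Collect_eq closed_Collect_le continuous_intros)
  show ?thesis
  proof (cases "K = {}")
    case True
    then have "u \<notin> K" for u by simp
    then have "\<not> (norm u = 1 \<and> r \<le> dist x u \<and> r \<le> dist (- x) u)" for u by (auto simp: K_def)
    then show ?thesis by (intro that[of 1]) auto
  next
    case False
    obtain u0 where "u0 \<in> K" "\<And>u. u \<in> K \<Longrightarrow> \<bar>\<phi> u\<bar> \<le> \<bar>\<phi> u0\<bar>"
      using continuous_attains_sup[OF \<open>compact K\<close> False, of "\<lambda>u. \<bar>\<phi> u\<bar>"]
        \<phi>.continuous_on[OF continuous_on_id] by (auto intro: continuous_intros)
    moreover from \<open>u0 \<in> K\<close> have "\<bar>\<phi> u0\<bar> < 1" using assms by (intro abs_\<phi>_lt_1) (auto simp: K_def)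
    ultimately show ?thesis using that[of "1 - \<bar>\<phi> u0\<bar>"] by (auto simp: K_def)
  qed
qed

lemma symmetric_perturbation_apply:
  assumes "norm (T + S) \<le> 1" "norm (T - S) \<le> 1"
  shows "blinfun_apply S u = \<beta> u *\<^sub>R blinfun_apply S z0"
    and "\<psi> (blinfun_apply S u) = 0"
proof -
  have add_le: "norm (blinfun_apply T u + blinfun_apply S u) \<le> norm u"
    and diff_le: "norm (blinfun_apply T u - blinfun_apply S u) \<le> norm u" for u
    using norm_blinfun_apply_le_if_norm_le_1[OF assms(1), of u]
      norm_blinfun_apply_le_if_norm_le_1[OF assms(2), of u]
    by (simp_all add: blinfun.add_left blinfun.diff_left)
  have S_x: "blinfun_apply S x = 0"
    using strictly_convex_space_eq_0_if_norm_add_diff_le[OF strictly_convex_codomain norm_y]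
      add_le[of x] diff_le[of x] norm_x by simp
  then show "blinfun_apply S u = \<beta> u *\<^sub>R blinfun_apply S z0"
    using arg_cong[OF domain_coordinates[of u], of "blinfun_apply S"]
    by (simp add: blinfun.add_right blinfun.scaleR_right)
  have "support_functional (\<lambda>u. \<psi> (blinfun_apply (T + S) u)) x"
    using support_functional_compose[OF support_functional_\<psi> linear_blinfun_apply _ _ norm_x, of "T + S"]
      add_le S_x by (simp add: blinfun.add_left)
  then have "(\<lambda>u. \<psi> (blinfun_apply (T + S) u)) = \<phi>"
    using support_functional_at(2)[OF smooth_domain norm_x] by blast
  then have "\<psi> (blinfun_apply T u) + \<psi> (blinfun_apply S u) = \<phi> u"
    by (metis blinfun.add_left \<psi>.add)
  then show "\<psi> (blinfun_apply S u) = 0"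
    using \<psi>_T[of u] by simp
qed

lemma CPP_if_symmetric_perturbation:
  assumes "S \<noteq> 0" "norm (T + S) \<le> 1" "norm (T - S) \<le> 1"
  shows "CPP x y"
proof -
  define s where "s = blinfun_apply S z0"
  note S_apply = symmetric_perturbation_apply(1)[OF assms(2,3), folded s_def]
  have "s \<noteq> 0"
  proof
    assume "s = 0"
    then have "S = 0" by (intro blinfun_eqI) (simp add: S_apply)
    then show False using \<open>S \<noteq> 0\<close> by simp
  qed
  define \<mu> where "\<mu> = norm s"
  have "norm (a *\<^sub>R y + (b * \<mu>) *\<^sub>R w) \<le> 1"
    if "\<phi> z = 0" "norm z = 1" "\<psi> w = 0" "norm w = 1" "norm (a *\<^sub>R x + b *\<^sub>R z) = 1"
    for z w a b
  proof -
    define u where "u = a *\<^sub>R x + b *\<^sub>R z"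
    have "z = \<beta> z *\<^sub>R z0" using domain_coordinates[of z] \<open>\<phi> z = 0\<close> by simp
    then have "\<bar>\<beta> z\<bar> = 1" using norm_z0 \<open>norm z = 1\<close> by (metis mult.right_neutral norm_scaleR)
    have "\<beta> u = b * \<beta> z"
      by (simp add: u_def \<beta>.add \<beta>.scaleR \<beta>_x)
    have "w = s /\<^sub>R \<mu> \<or> w = - (s /\<^sub>R \<mu>)"
      using dim2_unit_kernel_vectors[OF dim_codomain \<psi>.linear _ _ _ that(3,4), of y]
        symmetric_perturbation_apply(2)[OF assms(2,3)] \<psi>_y \<open>s \<noteq> 0\<close>
      by (simp add: \<mu>_def s_def \<psi>.scaleR)
    then have "(b * \<mu>) *\<^sub>R w = blinfun_apply S u \<or> (b * \<mu>) *\<^sub>R w = - blinfun_apply S u"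
      using S_apply[of u] \<open>\<beta> u = b * \<beta> z\<close> \<open>\<bar>\<beta> z\<bar> = 1\<close> \<open>s \<noteq> 0\<close>
      by (auto simp: \<mu>_def abs_if split: if_splits)
    moreover have "blinfun_apply T u = a *\<^sub>R y"
      using \<open>\<phi> z = 0\<close> \<phi>_x blinfun_apply_T[of u] by (simp add: u_def \<phi>.add \<phi>.scaleR)
    ultimately show ?thesis
      using norm_blinfun_apply_le_if_norm_le_1[OF assms(2), of u]
        norm_blinfun_apply_le_if_norm_le_1[OF assms(3), of u] that(5)
      by (auto simp: u_def blinfun.add_left blinfun.diff_left)
  qed
  moreover have "\<mu> > 0" using \<open>s \<noteq> 0\<close> by (simp add: \<mu>_def)
  ultimately show ?thesis
    unfolding CPP_def bj_orth_x_iff bj_orth_y_iff using norm_x norm_y zero_less_one by blast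
qed

theorem not_extreme_point_imp_CPP:
  assumes "\<not> T extreme_point_of cball 0 1"
  shows "CPP x y"
proof -
  obtain S where "S \<noteq> 0" "T + S \<in> cball 0 1" "T - S \<in> cball 0 1"
    using assms extreme_point_of_convex_iff[OF convex_cball, of T 0 1] norm_T by auto
  then show ?thesis using CPP_if_symmetric_perturbation by simp
qed

definition P :: "'a \<Rightarrow>\<^sub>L 'b" where "P = Blinfun (\<lambda>u. \<beta> u *\<^sub>R w0)"

lemma P_apply: "blinfun_apply P u = \<beta> u *\<^sub>R w0"
  unfolding P_def by (simp add: bounded_linear_Blinfun_apply[OF bounded_linear_scaleR_const[OF bounded_linear_\<beta>]])

lemma T_add_scaleR_P_apply: "blinfun_apply (T + t *\<^sub>R P) u = \<phi> u *\<^sub>R y + (t * \<beta> u) *\<^sub>R w0"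
  using blinfun_apply_T[of u] by (simp add: blinfun.add_left blinfun.scaleR_left P_apply)

lemma P_neq_0: "P \<noteq> 0"
  using P_apply[of z0] \<beta>_z0 norm_w0 by auto

lemma norm_T_add_scaleR_P_le_near_x:
  assumes "CPP x y"
  obtains r \<mu> where "r > 0" "\<mu> > 0"
    "\<And>u t. norm u = 1 \<Longrightarrow> dist x u < r \<or> dist (- x) u < r \<Longrightarrow> \<bar>t\<bar> \<le> \<mu> \<Longrightarrow>
      norm (blinfun_apply (T + t *\<^sub>R P) u) \<le> 1"
proof -
  obtain r \<mu> where r: "r > 0" and \<mu>: "\<mu> > 0" and H: "\<forall>z w. \<forall>a b::real.
      \<phi> z = 0 \<longrightarrow> norm z = 1 \<longrightarrow> \<psi> w = 0 \<longrightarrow> norm w = 1 \<longrightarrow>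
      a *\<^sub>R x + b *\<^sub>R z \<in> ball x r \<longrightarrow> norm (a *\<^sub>R x + b *\<^sub>R z) = 1 \<longrightarrow>
      norm (a *\<^sub>R y + (b * \<mu>) *\<^sub>R w) \<le> 1"
    using assms unfolding CPP_def bj_orth_x_iff bj_orth_y_iff by blast
  have near: "norm (blinfun_apply (T + t *\<^sub>R P) u) \<le> 1"
    if "dist x u < r" "norm u = 1" "\<bar>t\<bar> \<le> \<mu>" for u t
  proof -
    have "norm (\<phi> u *\<^sub>R y + (\<beta> u * \<mu>) *\<^sub>R w) \<le> 1" if "w = w0 \<or> w = - w0" for w
      using H[rule_format, of z0 w "\<phi> u" "\<beta> u"] that \<open>dist x u < r\<close> \<open>norm u = 1\<close>
        \<phi>_z0 norm_z0 \<psi>_w0 norm_w0 domain_coordinates[of u] by (auto simp: \<psi>.neg)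
    from this[of w0] this[of "- w0"]
    have "\<phi> u *\<^sub>R y + (\<beta> u * \<mu>) *\<^sub>R w0 \<in> cball 0 1" "\<phi> u *\<^sub>R y - (\<beta> u * \<mu>) *\<^sub>R w0 \<in> cball 0 1"
      by simp_all
    moreover have "\<bar>t / \<mu>\<bar> \<le> 1" using \<mu> \<open>\<bar>t\<bar> \<le> \<mu>\<close> by simp
    ultimately have "\<phi> u *\<^sub>R y + (t / \<mu>) *\<^sub>R ((\<beta> u * \<mu>) *\<^sub>R w0) \<in> cball 0 1"
      by (rule convex_add_scaleR_mem[OF convex_cball])
    then show ?thesis using \<mu> by (simp add: T_add_scaleR_P_apply)
  qed
  have "norm (blinfun_apply (T + t *\<^sub>R P) u) \<le> 1"
    if "norm u = 1" "dist x u < r \<or> dist (- x) u < r" "\<bar>t\<bar> \<le> \<mu>" for u t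
  proof (cases "dist x u < r")
    case False
    then have "dist x (- u) < r" using that(2) by (simp add: dist_norm norm_minus_commute add.commute)
    then show ?thesis using near[of "- u" t] that by (simp add: blinfun.minus_right)
  qed (use near that in auto)
  then show ?thesis using that r \<mu> by blast
qed

lemma norm_T_add_scaleR_P_le_away_from_x:
  assumes "r > 0"
  obtains \<delta> where "\<delta> > 0"
    "\<And>u t. norm u = 1 \<Longrightarrow> r \<le> dist x u \<Longrightarrow> r \<le> dist (- x) u \<Longrightarrow> \<bar>t\<bar> \<le> \<delta> \<Longrightarrow>
      norm (blinfun_apply (T + t *\<^sub>R P) u) \<le> 1"
proof -
  obtain \<delta> where \<delta>: "\<delta> > 0"
    and gap: "\<And>u. norm u = 1 \<Longrightarrow> r \<le> dist x u \<Longrightarrow> r \<le> dist (- x) u \<Longrightarrow> \<bar>\<phi> u\<bar> \<le> 1 - \<delta>"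
    using abs_\<phi>_le_away_from_x[OF assms] by blast
  have "norm (blinfun_apply (T + t *\<^sub>R P) u) \<le> 1"
    if "norm u = 1" "r \<le> dist x u" "r \<le> dist (- x) u" "\<bar>t\<bar> \<le> \<delta> / 2" for u t
  proof -
    have "norm (blinfun_apply (T + t *\<^sub>R P) u) \<le> \<bar>\<phi> u\<bar> + \<bar>t\<bar> * \<bar>\<beta> u\<bar>"
      using norm_triangle_ineq[of "\<phi> u *\<^sub>R y" "(t * \<beta> u) *\<^sub>R w0"] norm_y norm_w0
      by (simp add: T_add_scaleR_P_apply abs_mult)
    also have "\<dots> \<le> (1 - \<delta>) + \<delta> / 2 * 2"
      using gap[OF that(1-3)] abs_\<beta>_le[of u] that(1,4)
      by (intro add_mono mult_mono) auto
    finally show ?thesis by simp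
  qed
  then show ?thesis using that[of "\<delta> / 2"] \<delta> by simp
qed

theorem CPP_imp_not_extreme_point:
  assumes "CPP x y"
  shows "\<not> T extreme_point_of cball 0 1"
proof -
  obtain r \<mu> where "r > 0" "\<mu> > 0"
    and near: "\<And>u t. norm u = 1 \<Longrightarrow> dist x u < r \<or> dist (- x) u < r \<Longrightarrow> \<bar>t\<bar> \<le> \<mu> \<Longrightarrow>
      norm (blinfun_apply (T + t *\<^sub>R P) u) \<le> 1"
    using norm_T_add_scaleR_P_le_near_x[OF assms] by blast
  obtain \<delta> where "\<delta> > 0"
    and away: "\<And>u t. norm u = 1 \<Longrightarrow> r \<le> dist x u \<Longrightarrow> r \<le> dist (- x) u \<Longrightarrow> \<bar>t\<bar> \<le> \<delta> \<Longrightarrow>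
      norm (blinfun_apply (T + t *\<^sub>R P) u) \<le> 1"
    using norm_T_add_scaleR_P_le_away_from_x[OF \<open>r > 0\<close>] by blast
  define c where "c = min \<mu> \<delta>"
  have "norm (T + t *\<^sub>R P) \<le> 1" if "\<bar>t\<bar> \<le> c" for t
    using near away that by (intro norm_blinfun_le_1_if_on_sphere) (force simp: c_def not_less)
  from this[of c] this[of "- c"] have "T + c *\<^sub>R P \<in> cball 0 1" "T - c *\<^sub>R P \<in> cball 0 1"
    using \<open>\<mu> > 0\<close> \<open>\<delta> > 0\<close> by (simp_all add: c_def)
  moreover have "c *\<^sub>R P \<noteq> 0" using P_neq_0 \<open>\<mu> > 0\<close> \<open>\<delta> > 0\<close> by (simp add: c_def)
  ultimately show ?thesis
    using extreme_point_of_convex_iff[OF convex_cball, of T 0 1] norm_T by auto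
qed

end

theorem mainTheorem8:
  fixes T :: "'a::banach \<Rightarrow>\<^sub>L 'b::banach" and x :: 'a
  assumes "dim (UNIV :: 'a set) = 2" and "dim (UNIV :: 'b set) = 2"
    and "smooth_space TYPE('a)" and "smooth_space TYPE('b)"
    and "strictly_convex_space TYPE('b)"
    and "dim (range (blinfun_apply T)) = 1"
    and "norm T = 1"
    and "norm_att T = {x, -x}"
  shows "T extreme_point_of (cball 0 1) \<longleftrightarrow> \<not> CPP x (blinfun_apply T x)"
proof -
  interpret smooth_rank_one_contraction T x
    using assms by unfold_locales
  show ?thesis
    using CPP_imp_not_extreme_point not_extreme_point_imp_CPP by blast
qed

end
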